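(* Let $\gamma$ be a functorial with $\gamma(G)>1$ for every finite group $G\ne1$, satisfying (F1) and (F2). (1) If $G=A_1\times\dots\times A_n$ is the direct product of its normal subgroups $A_i$, then $h_\gamma(G)=\max\{h_\gamma(A_i)\mid 1\le i\le n\}$. (2) If $G=\langle A_i\mid 1\le i\le n\rangle$ is the join of its subnormal subgroups $A_i$, then $h_\gamma(G)\le\max\{h_\gamma(A_i)\mid 1\le i\le n\}$; if moreover $\gamma$ satisfies (F5), then $h_\gamma(G)=\max\{h_\gamma(A_i)\mid 1\le i\le n\}$.
   Context: All groups are finite. A functorial is a function $\theta$ assigning to each group $G$ a characteristic subgroup $\theta(G)$ such that $f(\theta(G))=\theta(f(G))$ for every isomorphism $f$. Conditions (for every group $G$): (F1) $f(\gamma(G))\subseteq\gamma(f(G))$ for every epimorphism $f:G\to G^*$; (F2) $\gamma(N)\subseteq\gamma(G)$ for every $N\trianglelefteq G$; (F5) $\gamma(G)\cap N\subseteq\gamma(N)$ for every $N\trianglelefteq G$. The $\gamma$-series is $\gamma_{(0)}(G)=1$ and $\gamma_{(i+1)}(G)$ the full preimage of $\gamma(G/\gamma_{(i)}(G))$; $h_\gamma(G)$ is the least $h$ with $\gamma_{(h)}(G)=G$. *)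

theory Defs
  imports "HOL-Algebra.Algebra"
begin

text \<open>A functorial is represented by its values on finite groups whose carrier is a
  set of natural numbers (every finite group is isomorphic to such a group); it is
  extended to finite groups of arbitrary type by transport of structure.\<close>

definition functorial :: "(nat monoid \<Rightarrow> nat set) \<Rightarrow> bool" where
  "functorial \<gamma> \<longleftrightarrow>
     (\<forall>G::nat monoid. group G \<and> finite (carrier G) \<longrightarrow>
        subgroup (\<gamma> G) G \<and> (\<forall>f \<in> iso G G. f ` \<gamma> G = \<gamma> G)) \<and>
     (\<forall>(G::nat monoid) (H::nat monoid) f. group G \<and> finite (carrier G) \<and> group H \<and> f \<in> iso G H
        \<longrightarrow> f ` \<gamma> G = \<gamma> H)"

definition nontrivial_functorial :: "(nat monoid \<Rightarrow> nat set) \<Rightarrow> bool" where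
  "nontrivial_functorial \<gamma> \<longleftrightarrow>
     (\<forall>G::nat monoid. group G \<and> finite (carrier G) \<and> carrier G \<noteq> {\<one>\<^bsub>G\<^esub>}
        \<longrightarrow> \<gamma> G \<noteq> {\<one>\<^bsub>G\<^esub>})"

definition F1 :: "(nat monoid \<Rightarrow> nat set) \<Rightarrow> bool" where
  "F1 \<gamma> \<longleftrightarrow>
     (\<forall>(G::nat monoid) (H::nat monoid) f. group G \<and> finite (carrier G) \<and> group H
        \<and> f \<in> hom G H \<and> f ` carrier G = carrier H \<longrightarrow> f ` \<gamma> G \<subseteq> \<gamma> H)"

definition F2 :: "(nat monoid \<Rightarrow> nat set) \<Rightarrow> bool" where
  "F2 \<gamma> \<longleftrightarrow>
     (\<forall>(G::nat monoid) N. group G \<and> finite (carrier G) \<and> N \<lhd> G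
        \<longrightarrow> \<gamma> (G\<lparr>carrier := N\<rparr>) \<subseteq> \<gamma> G)"

definition F5 :: "(nat monoid \<Rightarrow> nat set) \<Rightarrow> bool" where
  "F5 \<gamma> \<longleftrightarrow>
     (\<forall>(G::nat monoid) N. group G \<and> finite (carrier G) \<and> N \<lhd> G
        \<longrightarrow> \<gamma> G \<inter> N \<subseteq> \<gamma> (G\<lparr>carrier := N\<rparr>))"

definition enc_group :: "('a \<Rightarrow> nat) \<Rightarrow> 'a monoid \<Rightarrow> nat monoid" where
  "enc_group f G =
     \<lparr>carrier = f ` carrier G,
      monoid.mult = (\<lambda>x y. f (inv_into (carrier G) f x \<otimes>\<^bsub>G\<^esub> inv_into (carrier G) f y)),
      one = f \<one>\<^bsub>G\<^esub>\<rparr>"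

definition gext :: "(nat monoid \<Rightarrow> nat set) \<Rightarrow> 'a monoid \<Rightarrow> 'a set" where
  "gext \<gamma> G =
     (let f = (SOME f :: 'a \<Rightarrow> nat. inj_on f (carrier G))
      in {x \<in> carrier G. f x \<in> \<gamma> (enc_group f G)})"

fun gseries :: "(nat monoid \<Rightarrow> nat set) \<Rightarrow> 'a monoid \<Rightarrow> nat \<Rightarrow> 'a set" where
  "gseries \<gamma> G 0 = {\<one>\<^bsub>G\<^esub>}"
| "gseries \<gamma> G (Suc i) =
     {x \<in> carrier G. gseries \<gamma> G i #>\<^bsub>G\<^esub> x \<in> gext \<gamma> (G Mod gseries \<gamma> G i)}"

definition hgamma :: "(nat monoid \<Rightarrow> nat set) \<Rightarrow> 'a monoid \<Rightarrow> nat" where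
  "hgamma \<gamma> G = (LEAST h. gseries \<gamma> G h = carrier G)"

inductive subnormal :: "'a monoid \<Rightarrow> 'a set \<Rightarrow> bool" for G where
  refl: "subnormal G (carrier G)"
| step: "subnormal G K \<Longrightarrow> H \<lhd> G\<lparr>carrier := K\<rparr> \<Longrightarrow> subnormal G H"

definition internal_direct_product :: "'a monoid \<Rightarrow> nat set \<Rightarrow> (nat \<Rightarrow> 'a set) \<Rightarrow> bool" where
  "internal_direct_product G I A \<longleftrightarrow>
     (\<forall>i \<in> I. A i \<lhd> G) \<and>
     generate G (\<Union>i \<in> I. A i) = carrier G \<and>
     (\<forall>i \<in> I. A i \<inter> generate G (\<Union>j \<in> I - {i}. A j) = {\<one>\<^bsub>G\<^esub>})"

end

(*
  The gamma-series of a finite group reaches the whole group: while gamma_(k)(G) is proper,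
  the quotient G/gamma_(k)(G) is nontrivial, so its gamma is nontrivial and the series grows.

  By (F1) an epimorphism G -> H maps gamma_(k)(G) into gamma_(k)(H).  For N normal in G, the
  quotient N/gamma_(k)(N) maps onto the normal subgroup N gamma_(k)(G)/gamma_(k)(G) of
  G/gamma_(k)(G), so (F1) and (F2) give gamma_(k)(N) <= gamma_(k)(G) by induction on k, and
  along a subnormal chain the same holds for subnormal subgroups.  Hence if every A_i has height
  at most h, all A_i, and so the group they generate, lie in gamma_(h)(G).

  Conversely, a direct factor is an epimorphic image of G, so its height is at most h_gamma(G).
  Under (F5) one shows gamma_(k)(G) /\ N <= gamma_(k)(N) as well: once gamma_(k)(N) equals
  gamma_(k)(G) /\ N, the map above is an isomorphism along which (F5) pulls gamma back.  For
  subnormal A_i this bounds h_gamma(A_i) by h_gamma(G).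
*)

theory Submission
  imports Defs
begin

section \<open>Homomorphisms, quotients and direct factors\<close>

lemma inj_on_image_subset_iff:
  "inj_on f C \<Longrightarrow> A \<subseteq> C \<Longrightarrow> B \<subseteq> C \<Longrightarrow> f ` A \<subseteq> f ` B \<longleftrightarrow> A \<subseteq> B"
  by (metis image_mono inv_into_image_cancel)

lemma (in group) conjugation_iso:
  assumes "g \<in> carrier G"
  shows "(\<lambda>x. g \<otimes> x \<otimes> inv g) \<in> iso G G"
proof -
  have "bij_betw (\<lambda>x. g \<otimes> x \<otimes> inv g) (carrier G) (carrier G)"
    using conjugation_is_bij[OF assms] by (simp add: bij_betw_def inj_on_def image_def)
  moreover have "(\<lambda>x. g \<otimes> x \<otimes> inv g) \<in> hom G G"
    using assms by (auto intro!: homI simp: m_assoc) (simp add: m_assoc[symmetric])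
  ultimately show ?thesis
    by (simp add: iso_def)
qed

lemma iso_conj_surj_hom:
  assumes G: "group G" and f: "f \<in> iso G E" and g: "g \<in> iso H E'"
    and \<phi>: "\<phi> \<in> hom G H" and onto: "\<phi> ` carrier G = carrier H"
  shows "g \<circ> \<phi> \<circ> inv_into (carrier G) f \<in> hom E E'"
    and "(g \<circ> \<phi> \<circ> inv_into (carrier G) f) ` carrier E = carrier E'"
proof -
  show "g \<circ> \<phi> \<circ> inv_into (carrier G) f \<in> hom E E'"
    using hom_compose[OF hom_compose[OF iso_imp_homomorphism[OF group.iso_set_sym[OF G f]] \<phi>]
        iso_imp_homomorphism[OF g]] by (simp add: comp_assoc)
  have "(g \<circ> \<phi> \<circ> inv_into (carrier G) f) ` carrier E = g ` \<phi> ` inv_into (carrier G) f ` carrier E"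
    by (simp only: image_comp comp_assoc)
  also have "\<dots> = g ` \<phi> ` carrier G"
    using f inv_into_image_cancel[of f "carrier G" "carrier G"] by (simp add: iso_iff)
  also have "\<dots> = carrier E'"
    using g onto by (simp add: iso_iff)
  finally show "(g \<circ> \<phi> \<circ> inv_into (carrier G) f) ` carrier E = carrier E'" .
qed

lemma finite_carrier_FactGroup: "finite (carrier G) \<Longrightarrow> finite (carrier (G Mod N))"
  by (simp add: carrier_FactGroup)

lemma finite_group_restrict:
  assumes "group G" and "finite (carrier G)" and "subgroup H G"
  shows "group (G\<lparr>carrier := H\<rparr>)" and "finite (carrier (G\<lparr>carrier := H\<rparr>))"
  using subgroup.subgroup_is_group[OF assms(3,1)] finite_subset[OF subgroup.subset[OF assms(3)] assms(2)]
  by auto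

lemma induced_hom_FactGroup:
  assumes G: "group G" and H: "group H" and \<theta>: "\<theta> \<in> hom G H" and N: "N \<lhd> G"
    and triv: "\<And>n. n \<in> N \<Longrightarrow> \<theta> n = \<one>\<^bsub>H\<^esub>"
  obtains \<psi> where "\<psi> \<in> hom (G Mod N) H" "\<And>x. x \<in> carrier G \<Longrightarrow> \<psi> (N #>\<^bsub>G\<^esub> x) = \<theta> x"
    "\<psi> ` carrier (G Mod N) = \<theta> ` carrier G"
proof -
  interpret G: group G by fact
  interpret H: group H by fact
  interpret N: normal N G by fact
  have "\<theta> x = \<theta> y"
    if x: "x \<in> carrier G" and y: "y \<in> carrier G" and eq: "N #>\<^bsub>G\<^esub> x = N #>\<^bsub>G\<^esub> y" for x y
  proof -
    obtain n where n: "n \<in> N" "x = n \<otimes>\<^bsub>G\<^esub> y"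
      using G.rcos_self[OF x N.subgroup_axioms] eq unfolding r_coset_def by auto
    then show ?thesis
      using triv[OF n(1)] hom_mult[OF \<theta>] y N.subset hom_in_carrier[OF \<theta>] by auto
  qed
  then obtain \<psi> where \<psi>: "\<psi> \<in> hom (G Mod N) H" "\<And>x. x \<in> carrier G \<Longrightarrow> \<psi> (N #>\<^bsub>G\<^esub> x) = \<theta> x"
    using FactGroup_universal[OF \<theta> N] by blast
  moreover have "\<psi> ` carrier (G Mod N) = \<theta> ` carrier G"
    unfolding carrier_FactGroup image_image using \<psi>(2) by simp
  ultimately show thesis
    using that by blast
qed

lemma FactGroup_surj_hom:
  assumes G: "group G" and H: "group H" and \<phi>: "\<phi> \<in> hom G H" and onto: "\<phi> ` carrier G = carrier H"
    and M: "M \<lhd> G" and L: "L \<lhd> H" and \<phi>_M: "\<phi> ` M \<subseteq> L"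
  obtains \<psi> where "\<psi> \<in> hom (G Mod M) (H Mod L)" "\<psi> ` carrier (G Mod M) = carrier (H Mod L)"
    "\<And>x. x \<in> carrier G \<Longrightarrow> \<psi> (M #>\<^bsub>G\<^esub> x) = L #>\<^bsub>H\<^esub> \<phi> x"
proof -
  let ?\<theta> = "(\<lambda>a. L #>\<^bsub>H\<^esub> a) \<circ> \<phi>"
  have \<theta>: "?\<theta> \<in> hom G (H Mod L)"
    using hom_compose[OF \<phi> normal.r_coset_hom_Mod[OF L]] .
  have \<theta>_triv: "?\<theta> n = \<one>\<^bsub>H Mod L\<^esub>" if "n \<in> M" for n
    using \<phi>_M that subgroup.rcos_const[OF normal_imp_subgroup[OF L] H] by auto
  obtain \<psi> where \<psi>: "\<psi> \<in> hom (G Mod M) (H Mod L)"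
      "\<And>x. x \<in> carrier G \<Longrightarrow> \<psi> (M #>\<^bsub>G\<^esub> x) = ?\<theta> x"
      "\<psi> ` carrier (G Mod M) = ?\<theta> ` carrier G"
    using induced_hom_FactGroup[OF G normal.factorgroup_is_group[OF L] \<theta> M \<theta>_triv] by blast
  have "\<psi> ` carrier (G Mod M) = (\<lambda>a. L #>\<^bsub>H\<^esub> a) ` \<phi> ` carrier G"
    using \<psi>(3) by (simp add: image_comp)
  also have "\<dots> = carrier (H Mod L)"
    by (simp add: onto carrier_FactGroup)
  finally show thesis
    using that \<psi>(1,2) by simp
qed

lemma (in normal) r_coset_hom_Mod_restrict:
  assumes "A \<subseteq> carrier G"
  shows "(\<lambda>a. H #> a) \<in> hom (G\<lparr>carrier := A\<rparr>) (G Mod H)"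
  using hom_mult[OF r_coset_hom_Mod] hom_in_carrier[OF r_coset_hom_Mod] subsetD[OF assms]
  by (intro homI) auto

lemma normal_image_FactGroup:
  assumes "N \<lhd> G" and M: "M \<lhd> G"
  shows "(\<lambda>a. M #>\<^bsub>G\<^esub> a) ` N \<lhd> G Mod M"
proof -
  interpret M: normal M G by fact
  have "group_hom G (G Mod M) (\<lambda>a. M #>\<^bsub>G\<^esub> a)"
    using M.r_coset_hom_Mod M.factorgroup_is_group by (simp add: group_hom_def group_hom_axioms_def)
  moreover have "(\<lambda>a. M #>\<^bsub>G\<^esub> a) ` carrier G = carrier (G Mod M)"
    by (simp add: carrier_FactGroup)
  ultimately show ?thesis
    using normal.surj_hom_normal_subgroup[OF assms(1)] by blast
qed

text \<open>The canonical map \<open>N/L \<rightarrow> NM/M\<close>, where \<open>NM/M\<close> is the image of \<open>N\<close> in \<open>G/M\<close>.\<close>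

lemma FactGroup_normal_subgroup_hom:
  assumes G: "group G" and N: "N \<lhd> G" and M: "M \<lhd> G"
    and L: "L \<lhd> G\<lparr>carrier := N\<rparr>" and LM: "L \<subseteq> M"
  obtains \<psi> where
    "\<psi> \<in> hom (G\<lparr>carrier := N\<rparr> Mod L) ((G Mod M)\<lparr>carrier := (\<lambda>a. M #>\<^bsub>G\<^esub> a) ` N\<rparr>)"
    "\<psi> ` carrier (G\<lparr>carrier := N\<rparr> Mod L) = (\<lambda>a. M #>\<^bsub>G\<^esub> a) ` N"
    "\<And>y. y \<in> N \<Longrightarrow> \<psi> (L #>\<^bsub>G\<^esub> y) = M #>\<^bsub>G\<^esub> y"
proof -
  interpret M: normal M G by fact
  let ?Q = "(\<lambda>a. M #>\<^bsub>G\<^esub> a) ` N"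
  have sN: "subgroup N G"
    using normal_imp_subgroup[OF N] .
  have Q: "group ((G Mod M)\<lparr>carrier := ?Q\<rparr>)"
    using subgroup.subgroup_is_group[OF normal_imp_subgroup[OF normal_image_FactGroup[OF N M]]
        M.factorgroup_is_group] .
  have \<theta>: "(\<lambda>a. M #>\<^bsub>G\<^esub> a) \<in> hom (G\<lparr>carrier := N\<rparr>) ((G Mod M)\<lparr>carrier := ?Q\<rparr>)"
    using M.r_coset_hom_Mod_restrict[OF subgroup.subset[OF sN]] by (simp add: hom_def Pi_iff)
  have \<theta>_triv: "M #>\<^bsub>G\<^esub> n = \<one>\<^bsub>(G Mod M)\<lparr>carrier := ?Q\<rparr>\<^esub>" if "n \<in> L" for n
    using M.rcos_const that LM by auto
  obtain \<psi> where "\<psi> \<in> hom (G\<lparr>carrier := N\<rparr> Mod L) ((G Mod M)\<lparr>carrier := ?Q\<rparr>)"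
      "\<And>y. y \<in> N \<Longrightarrow> \<psi> (L #>\<^bsub>G\<^esub> y) = M #>\<^bsub>G\<^esub> y" "\<psi> ` carrier (G\<lparr>carrier := N\<rparr> Mod L) = ?Q"
    using induced_hom_FactGroup[OF subgroup.subgroup_is_group[OF sN G] Q \<theta> L \<theta>_triv] by auto
  with that show thesis
    by blast
qed

lemma FactGroup_normal_subgroup_hom_inj:
  assumes G: "group G" and N: "N \<lhd> G" and M: "M \<lhd> G"
    and L: "L \<lhd> G\<lparr>carrier := N\<rparr>" and MNL: "M \<inter> N \<subseteq> L"
    and \<psi>: "\<psi> \<in> hom (G\<lparr>carrier := N\<rparr> Mod L) ((G Mod M)\<lparr>carrier := (\<lambda>a. M #>\<^bsub>G\<^esub> a) ` N\<rparr>)"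
    and \<psi>_rcos: "\<And>y. y \<in> N \<Longrightarrow> \<psi> (L #>\<^bsub>G\<^esub> y) = M #>\<^bsub>G\<^esub> y"
  shows "inj_on \<psi> (carrier (G\<lparr>carrier := N\<rparr> Mod L))"
proof -
  interpret M: normal M G by fact
  have sN: "subgroup N G"
    using normal_imp_subgroup[OF N] .
  have "C = \<one>\<^bsub>G\<lparr>carrier := N\<rparr> Mod L\<^esub>"
    if C: "C \<in> carrier (G\<lparr>carrier := N\<rparr> Mod L)" and one: "\<psi> C = \<one>\<^bsub>G Mod M\<^esub>" for C
  proof -
    obtain y where y: "y \<in> N" "C = L #>\<^bsub>G\<^esub> y"
      using C by (auto simp: carrier_FactGroup)
    then have "M #>\<^bsub>G\<^esub> y = M"
      using one \<psi>_rcos by simp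
    then have "y \<in> L"
      using group.coset_join1[OF G _ _ M.subgroup_axioms] y(1) subgroup.subset[OF sN] MNL by blast
    then show ?thesis
      using y(2) subgroup.rcos_const[OF normal_imp_subgroup[OF L] subgroup.subgroup_is_group[OF sN G]]
      by simp
  qed
  then show ?thesis
    using inj_on_one_iff'[OF \<psi> normal.factorgroup_is_group[OF L] subgroup.subgroup_is_group[OF
          normal_imp_subgroup[OF normal_image_FactGroup[OF N M]] M.factorgroup_is_group]]
    by simp
qed

lemma (in group) normal_generate_UN:
  assumes "\<forall>j \<in> J. A j \<lhd> G"
  shows "generate G (\<Union>j \<in> J. A j) \<lhd> G"
proof (rule normal_generateI)
  show "(\<Union>j \<in> J. A j) \<subseteq> carrier G"
    using assms normal_imp_subgroup subgroup.subset by blast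
next
  fix h g assume "h \<in> (\<Union>j \<in> J. A j)" and "g \<in> carrier G"
  then show "g \<otimes> h \<otimes> inv g \<in> (\<Union>j \<in> J. A j)"
    using assms normal_invE(2) by blast
qed

lemma (in group) complement_FactGroup_iso:
  assumes A: "subgroup A G" and M: "M \<lhd> G"
    and disjoint: "A \<inter> M = {\<one>}" and gen: "generate G (A \<union> M) = carrier G"
  shows "(\<lambda>a. M #> a) \<in> iso (G\<lparr>carrier := A\<rparr>) (G Mod M)"
proof -
  interpret M: normal M G by fact
  have GA: "group (G\<lparr>carrier := A\<rparr>)"
    using subgroup.subgroup_is_group[OF A is_group] .
  have \<pi>: "(\<lambda>a. M #> a) \<in> hom (G\<lparr>carrier := A\<rparr>) (G Mod M)"
    using M.r_coset_hom_Mod_restrict[OF subgroup.subset[OF A]] .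
  have "a = \<one>" if "a \<in> A" and "M #> a = \<one>\<^bsub>G Mod M\<^esub>" for a
    using coset_join1[of M a] that disjoint subgroup.subset[OF A] M.subgroup_axioms by auto
  then have inj: "inj_on (\<lambda>a. M #> a) A"
    using inj_on_one_iff'[OF \<pi> GA M.factorgroup_is_group] by simp
  let ?P = "{x \<in> carrier G. M #> x \<in> (\<lambda>a. M #> a) ` A}"
  have img: "subgroup ((\<lambda>a. M #> a) ` A) (G Mod M)"
    using group_hom.img_is_subgroup[of "G\<lparr>carrier := A\<rparr>" "G Mod M"] \<pi> GA M.factorgroup_is_group
    by (simp add: group_hom_def group_hom_axioms_def)
  have P: "subgroup ?P G"
    using M.factgroup_subgroup_union_subgroup[OF img] M.factgroup_subgroup_union_char[OF img] by simp
  have AM: "A \<union> M \<subseteq> ?P"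
  proof -
    have "M #> m = M #> \<one>" if "m \<in> M" for m
      using M.rcos_const[OF is_group that] coset_mult_one M.subset by simp
    then show ?thesis
      using subgroup.subset[OF A] subgroup.one_closed[OF A] M.subset by blast
  qed
  have "carrier G \<subseteq> ?P"
    using generate_subgroup_incl[OF AM P] gen by simp
  then have "(\<lambda>a. M #> a) ` A = carrier (G Mod M)"
    using hom_carrier[OF \<pi>] by (auto simp: carrier_FactGroup)
  then show ?thesis
    using \<pi> inj by (simp add: iso_iff)
qed

lemma internal_direct_product_factor_surj_hom:
  assumes G: "group G" and idp: "internal_direct_product G I A" and i: "i \<in> I"
  obtains \<phi> where "\<phi> \<in> hom G (G\<lparr>carrier := A i\<rparr>)" "\<phi> ` carrier G = A i"
proof -
  interpret G: group G by fact
  let ?M = "generate G (\<Union>j \<in> I - {i}. A j)"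
  have A: "\<forall>j \<in> I. A j \<lhd> G" and gen: "generate G (\<Union>j \<in> I. A j) = carrier G"
    and disjoint: "A i \<inter> ?M = {\<one>\<^bsub>G\<^esub>}"
    using idp i unfolding internal_direct_product_def by simp_all
  have M: "?M \<lhd> G"
    using G.normal_generate_UN[of "I - {i}" A] A by blast
  have Ai: "subgroup (A i) G"
    using A i normal_imp_subgroup by blast
  have "(\<Union>j \<in> I - {i}. A j) \<subseteq> ?M"
    using generate.incl by (rule subsetI)
  then have UN_sub: "(\<Union>j \<in> I. A j) \<subseteq> A i \<union> ?M"
    by blast
  have "carrier G \<subseteq> generate G (A i \<union> ?M)"
    using G.mono_generate[OF UN_sub] gen by simp
  moreover have "A i \<union> ?M \<subseteq> carrier G"
    using subgroup.subset[OF Ai] subgroup.subset[OF normal_imp_subgroup[OF M]] by simp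
  then have "generate G (A i \<union> ?M) \<subseteq> carrier G"
    using subgroup.subset[OF G.generate_is_subgroup] by blast
  ultimately have "generate G (A i \<union> ?M) = carrier G"
    by blast
  then have \<pi>: "(\<lambda>a. ?M #>\<^bsub>G\<^esub> a) \<in> iso (G\<lparr>carrier := A i\<rparr>) (G Mod ?M)"
    using G.complement_FactGroup_iso[OF Ai M disjoint] by blast
  let ?\<pi>' = "inv_into (A i) (\<lambda>a. ?M #>\<^bsub>G\<^esub> a)"
  have \<pi>': "?\<pi>' \<in> iso (G Mod ?M) (G\<lparr>carrier := A i\<rparr>)"
    using group.iso_set_sym[OF subgroup.subgroup_is_group[OF Ai G] \<pi>] by simp
  show thesis
  proof (rule that)
    show "?\<pi>' \<circ> (\<lambda>a. ?M #>\<^bsub>G\<^esub> a) \<in> hom G (G\<lparr>carrier := A i\<rparr>)"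
      using hom_compose[OF normal.r_coset_hom_Mod[OF M] iso_imp_homomorphism[OF \<pi>']] .
    have "?\<pi>' ` carrier (G Mod ?M) = A i"
      using \<pi>' by (simp add: iso_iff)
    then show "(?\<pi>' \<circ> (\<lambda>a. ?M #>\<^bsub>G\<^esub> a)) ` carrier G = A i"
      unfolding image_comp[symmetric] by (simp add: carrier_FactGroup)
  qed
qed

lemma normal_imp_subnormal: "H \<lhd> G \<Longrightarrow> subnormal G H"
  by (rule subnormal.step[OF subnormal.refl]) simp

lemma subnormal_imp_subgroup:
  assumes "group G" and "subnormal G H"
  shows "subgroup H G"
  using assms(2)
proof (induction rule: subnormal.induct)
  case refl
  show ?case
    using group.subgroup_self[OF assms(1)] .
next
  case (step K H)
  then show ?case
    using group.incl_subgroup[OF assms(1)] normal_imp_subgroup by blast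
qed

section \<open>The functorial on finite groups of arbitrary type\<close>

lemma enc_group_iso:
  assumes "group G" and "inj_on f (carrier G)"
  shows "f \<in> iso G (enc_group f G)"
  using assms unfolding iso_iff
  by (auto simp: hom_def enc_group_def group.is_monoid monoid.m_closed)

lemma group_enc_group:
  assumes "group G" and f: "inj_on f (carrier G)"
  shows "group (enc_group f G)"
proof -
  interpret group G by fact
  show ?thesis
  proof (rule groupI)
    fix x assume "x \<in> carrier (enc_group f G)"
    then obtain a where "a \<in> carrier G" "x = f a" by (auto simp: enc_group_def)
    then show "\<exists>y\<in>carrier (enc_group f G). y \<otimes>\<^bsub>enc_group f G\<^esub> x = \<one>\<^bsub>enc_group f G\<^esub>"
      using f by (auto simp: enc_group_def) (metis l_inv inv_closed)
  qed (use f in \<open>auto simp: enc_group_def m_assoc\<close>)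
qed

lemma finite_group_iso_nat_group:
  fixes G :: "'a monoid"
  assumes "group G" and "finite (carrier G)"
  obtains f and E :: "nat monoid" where "group E" "finite (carrier E)" "f \<in> iso G E"
proof -
  obtain f :: "'a \<Rightarrow> nat" where f: "inj_on f (carrier G)"
    using finite_imp_inj_to_nat_seg[OF assms(2)] by blast
  show thesis
    by (rule that[OF group_enc_group[OF assms(1) f] _ enc_group_iso[OF assms(1) f]])
      (simp add: enc_group_def assms(2))
qed

lemma functorial_subgroup:
  assumes "functorial \<gamma>" and "group E" and "finite (carrier E)"
  shows "subgroup (\<gamma> E) E"
  using assms unfolding functorial_def by blast

lemma functorial_iso_image:
  assumes "functorial \<gamma>" and "group E" and "finite (carrier E)" and "group E'" and "\<phi> \<in> iso E E'"
  shows "\<phi> ` \<gamma> E = \<gamma> E'"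
  using assms unfolding functorial_def by blast

lemma F1D:
  assumes "F1 \<gamma>" and "group E" and "finite (carrier E)" and "group E'"
    and "\<phi> \<in> hom E E'" and "\<phi> ` carrier E = carrier E'"
  shows "\<phi> ` \<gamma> E \<subseteq> \<gamma> E'"
  using assms unfolding F1_def by blast

lemma F2D:
  assumes "F2 \<gamma>" and "group E" and "finite (carrier E)" and "N \<lhd> E"
  shows "\<gamma> (E\<lparr>carrier := N\<rparr>) \<subseteq> \<gamma> E"
  using assms unfolding F2_def by blast

lemma F5D:
  assumes "F5 \<gamma>" and "group E" and "finite (carrier E)" and "N \<lhd> E"
  shows "\<gamma> E \<inter> N \<subseteq> \<gamma> (E\<lparr>carrier := N\<rparr>)"
  using assms unfolding F5_def by blast

text \<open>The encoding chosen in \<^const>\<open>gext\<close> is irrelevant: any isomorphism onto a group of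
  naturals computes it.\<close>

lemma gext_via_iso:
  assumes \<gamma>: "functorial \<gamma>" and G: "group G" "finite (carrier G)"
    and E: "group E" and \<phi>: "\<phi> \<in> iso G E"
  shows "gext \<gamma> G = {x \<in> carrier G. \<phi> x \<in> \<gamma> E}"
proof -
  define f where "f = (SOME f :: 'a \<Rightarrow> nat. inj_on f (carrier G))"
  have f: "inj_on f (carrier G)"
    unfolding f_def using someI_ex finite_imp_inj_to_nat_seg[OF G(2)] by (metis (mono_tags))
  let ?F = "enc_group f G"
  have F: "group ?F" "finite (carrier ?F)" "f \<in> iso G ?F"
    using G f group_enc_group enc_group_iso by (auto simp: enc_group_def)
  let ?\<psi> = "\<phi> \<circ> inv_into (carrier G) f"
  have \<psi>: "?\<psi> \<in> iso ?F E"
    using iso_set_trans[OF group.iso_set_sym[OF G(1) F(3)] \<phi>] .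
  have \<psi>_image: "?\<psi> ` \<gamma> ?F = \<gamma> E"
    using functorial_iso_image[OF \<gamma> F(1,2) E \<psi>] .
  have \<psi>_inj: "inj_on ?\<psi> (carrier ?F)"
    using \<psi> by (simp add: iso_iff)
  have "\<gamma> ?F \<subseteq> carrier ?F"
    using subgroup.subset[OF functorial_subgroup[OF \<gamma> F(1,2)]] .
  then have "f x \<in> \<gamma> ?F \<longleftrightarrow> \<phi> x \<in> \<gamma> E" if x: "x \<in> carrier G" for x
    using inj_on_image_mem_iff[OF \<psi>_inj _ \<open>\<gamma> ?F \<subseteq> carrier ?F\<close>, of "f x"] \<psi>_image f x
    by (simp add: enc_group_def)
  moreover have "gext \<gamma> G = {x \<in> carrier G. f x \<in> \<gamma> ?F}"
    by (simp add: gext_def f_def Let_def)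
  ultimately show ?thesis
    by blast
qed

lemma gext_subset_carrier: "gext \<gamma> G \<subseteq> carrier G"
  by (auto simp: gext_def Let_def)

lemma gext_of_nat_group:
  fixes E :: "nat monoid"
  assumes "functorial \<gamma>" and "group E" and "finite (carrier E)"
  shows "gext \<gamma> E = \<gamma> E"
  using gext_via_iso[OF assms assms(2) iso_set_refl] subgroup.subset[OF functorial_subgroup[OF assms]]
  by blast

lemma gext_iso_image:
  assumes \<gamma>: "functorial \<gamma>" and G: "group G" "finite (carrier G)"
    and H: "group H" and \<phi>: "\<phi> \<in> iso G H"
  shows "\<phi> ` gext \<gamma> G = gext \<gamma> H"
proof -
  have onto: "\<phi> ` carrier G = carrier H"
    using \<phi> by (simp add: iso_iff)
  then have "finite (carrier H)"
    using finite_imageI[OF G(2), of \<phi>] by simp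
  then obtain g and E :: "nat monoid" where E: "group E" and g: "g \<in> iso H E"
    using finite_group_iso_nat_group[OF H] by blast
  have "gext \<gamma> G = {x \<in> carrier G. g (\<phi> x) \<in> \<gamma> E}"
    using gext_via_iso[OF \<gamma> G E iso_set_trans[OF \<phi> g]] by simp
  moreover have "gext \<gamma> H = {y \<in> carrier H. g y \<in> \<gamma> E}"
    using gext_via_iso[OF \<gamma> H \<open>finite (carrier H)\<close> E g] .
  ultimately show ?thesis
    using onto by auto
qed

lemma gext_iso_image_nat:
  fixes E :: "nat monoid"
  assumes \<gamma>: "functorial \<gamma>" and G: "group G" "finite (carrier G)"
    and E: "group E" and f: "f \<in> iso G E"
  shows "f ` gext \<gamma> G = \<gamma> E"
proof -
  have "finite (carrier E)"
    using f finite_imageI[OF G(2), of f] by (simp add: iso_iff)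
  then show ?thesis
    using gext_iso_image[OF \<gamma> G E f] gext_of_nat_group[OF \<gamma> E] by simp
qed

lemma gext_eq_inv_into_image_nat:
  fixes E :: "nat monoid"
  assumes \<gamma>: "functorial \<gamma>" and G: "group G" "finite (carrier G)"
    and E: "group E" and f: "f \<in> iso G E"
  shows "gext \<gamma> G = inv_into (carrier G) f ` \<gamma> E"
proof -
  have "inj_on f (carrier G)"
    using f by (simp add: iso_iff)
  then have "inv_into (carrier G) f ` f ` gext \<gamma> G = gext \<gamma> G"
    by (rule inv_into_image_cancel[OF _ gext_subset_carrier])
  then show ?thesis
    using gext_iso_image_nat[OF assms] by simp
qed

lemma normal_functorial:
  assumes \<gamma>: "functorial \<gamma>" and E: "group E" "finite (carrier E)"
  shows "\<gamma> E \<lhd> E"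
proof (rule group.normal_invI[OF E(1) functorial_subgroup[OF assms]])
  fix x h assume "x \<in> carrier E" and "h \<in> \<gamma> E"
  then show "x \<otimes>\<^bsub>E\<^esub> h \<otimes>\<^bsub>E\<^esub> inv\<^bsub>E\<^esub> x \<in> \<gamma> E"
    using functorial_iso_image[OF \<gamma> E E(1) group.conjugation_iso[OF E(1)]] by blast
qed

lemma normal_gext:
  assumes \<gamma>: "functorial \<gamma>" and G: "group G" "finite (carrier G)"
  shows "gext \<gamma> G \<lhd> G"
proof -
  obtain f and E :: "nat monoid" where E: "group E" "finite (carrier E)" and f: "f \<in> iso G E"
    using finite_group_iso_nat_group[OF G] by blast
  have "gext \<gamma> G = inv_into (carrier G) f ` \<gamma> E"
    using gext_eq_inv_into_image_nat[OF \<gamma> G E(1) f] .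
  then show ?thesis
    using iso_normal_subgroup[OF group.iso_set_sym[OF G(1) f] E(1) G(1) normal_functorial[OF \<gamma> E]]
    by simp
qed

lemma gext_nontrivial:
  assumes \<gamma>: "functorial \<gamma>" and "nontrivial_functorial \<gamma>" and G: "group G" "finite (carrier G)"
    and "carrier G \<noteq> {\<one>\<^bsub>G\<^esub>}"
  shows "gext \<gamma> G \<noteq> {\<one>\<^bsub>G\<^esub>}"
proof
  assume triv: "gext \<gamma> G = {\<one>\<^bsub>G\<^esub>}"
  obtain f and E :: "nat monoid" where E: "group E" "finite (carrier E)" and f: "f \<in> iso G E"
    using finite_group_iso_nat_group[OF G] by blast
  have f_one: "f \<one>\<^bsub>G\<^esub> = \<one>\<^bsub>E\<^esub>"
    using hom_one[OF iso_imp_homomorphism[OF f] G(1) E(1)] .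
  have "carrier E \<noteq> {\<one>\<^bsub>E\<^esub>}"
  proof
    assume "carrier E = {\<one>\<^bsub>E\<^esub>}"
    then have "f ` carrier G = f ` {\<one>\<^bsub>G\<^esub>}"
      using f f_one by (simp add: iso_iff)
    moreover have "{\<one>\<^bsub>G\<^esub>} \<subseteq> carrier G"
      using G(1) by (simp add: group.is_monoid)
    moreover have "inj_on f (carrier G)"
      using f by (simp add: iso_iff)
    ultimately show False
      using inj_on_image_eq_iff[of f "carrier G" "carrier G" "{\<one>\<^bsub>G\<^esub>}"] \<open>carrier G \<noteq> {\<one>\<^bsub>G\<^esub>}\<close>
      by simp
  qed
  then have "\<gamma> E \<noteq> {\<one>\<^bsub>E\<^esub>}"
    using \<open>nontrivial_functorial \<gamma>\<close> E unfolding nontrivial_functorial_def by blast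
  moreover have "\<gamma> E = {\<one>\<^bsub>E\<^esub>}"
    using gext_iso_image[OF \<gamma> G E(1) f] gext_of_nat_group[OF \<gamma> E] triv f_one by simp
  ultimately show False ..
qed

lemma gext_subgroup_iso_image_nat:
  fixes E :: "nat monoid"
  assumes \<gamma>: "functorial \<gamma>" and G: "group G" "finite (carrier G)"
    and E: "group E" and f: "f \<in> iso G E" and N: "subgroup N G"
  shows "f ` gext \<gamma> (G\<lparr>carrier := N\<rparr>) = \<gamma> (E\<lparr>carrier := f ` N\<rparr>)"
proof -
  note GN = finite_group_restrict[OF G N]
  have EN: "group (E\<lparr>carrier := f ` N\<rparr>)"
    using subgroup.subgroup_is_group[OF subgroup.iso_subgroup[OF N G(1) E f] E] .
  have "restrict f N ` gext \<gamma> (G\<lparr>carrier := N\<rparr>) = \<gamma> (E\<lparr>carrier := f ` N\<rparr>)"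
    using gext_iso_image_nat[OF \<gamma> GN EN iso_restrict[OF f G(1) E N]] .
  moreover have "restrict f N ` gext \<gamma> (G\<lparr>carrier := N\<rparr>) = f ` gext \<gamma> (G\<lparr>carrier := N\<rparr>)"
    using gext_subset_carrier[of \<gamma> "G\<lparr>carrier := N\<rparr>"] by (intro image_cong) auto
  ultimately show ?thesis
    by simp
qed

lemma gext_surj_hom_image_subset:
  assumes \<gamma>: "functorial \<gamma>" and "F1 \<gamma>" and G: "group G" "finite (carrier G)" and H: "group H"
    and \<phi>: "\<phi> \<in> hom G H" and onto: "\<phi> ` carrier G = carrier H"
  shows "\<phi> ` gext \<gamma> G \<subseteq> gext \<gamma> H"
proof -
  have "finite (carrier H)"
    using finite_imageI[OF G(2), of \<phi>] onto by simp
  obtain f and E :: "nat monoid" where E: "group E" "finite (carrier E)" and f: "f \<in> iso G E"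
    using finite_group_iso_nat_group[OF G] by blast
  obtain g and E' :: "nat monoid" where E': "group E'" "finite (carrier E')" and g: "g \<in> iso H E'"
    using finite_group_iso_nat_group[OF H \<open>finite (carrier H)\<close>] by blast
  let ?\<psi> = "g \<circ> \<phi> \<circ> inv_into (carrier G) f"
  note \<psi> = iso_conj_surj_hom[OF G(1) f g \<phi> onto]
  have \<psi>_image: "?\<psi> ` \<gamma> E = g ` \<phi> ` gext \<gamma> G"
  proof -
    have "?\<psi> ` \<gamma> E = g ` \<phi> ` inv_into (carrier G) f ` \<gamma> E"
      by (simp only: image_comp comp_assoc)
    then show ?thesis
      using gext_eq_inv_into_image_nat[OF \<gamma> G E(1) f] by simp
  qed
  have "\<gamma> E' = g ` gext \<gamma> H"
    using gext_iso_image_nat[OF \<gamma> H \<open>finite (carrier H)\<close> E'(1) g] by simp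
  then have "g ` \<phi> ` gext \<gamma> G \<subseteq> g ` gext \<gamma> H"
    using F1D[OF \<open>F1 \<gamma>\<close> E E'(1) \<psi>] unfolding \<psi>_image by simp
  moreover have "\<phi> ` gext \<gamma> G \<subseteq> carrier H"
    using image_mono[OF gext_subset_carrier[of \<gamma> G], of \<phi>] onto by simp
  moreover have "inj_on g (carrier H)"
    using g by (simp add: iso_iff)
  ultimately show ?thesis
    using inj_on_image_subset_iff[of g "carrier H" _ "gext \<gamma> H"] gext_subset_carrier[of \<gamma> H]
    by simp
qed

lemma gext_normal_subgroup_subset:
  assumes \<gamma>: "functorial \<gamma>" and "F2 \<gamma>" and G: "group G" "finite (carrier G)" and N: "N \<lhd> G"
  shows "gext \<gamma> (G\<lparr>carrier := N\<rparr>) \<subseteq> gext \<gamma> G"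
proof -
  obtain f and E :: "nat monoid" where E: "group E" "finite (carrier E)" and f: "f \<in> iso G E"
    using finite_group_iso_nat_group[OF G] by blast
  have f_inj: "inj_on f (carrier G)"
    using f by (simp add: iso_iff)
  have N_sub: "gext \<gamma> (G\<lparr>carrier := N\<rparr>) \<subseteq> carrier G"
    using gext_subset_carrier[of \<gamma> "G\<lparr>carrier := N\<rparr>"] subgroup.subset[OF normal_imp_subgroup[OF N]]
    by simp
  have "f ` gext \<gamma> (G\<lparr>carrier := N\<rparr>) = \<gamma> (E\<lparr>carrier := f ` N\<rparr>)"
    using gext_subgroup_iso_image_nat[OF \<gamma> G E(1) f normal_imp_subgroup[OF N]] .
  also have "\<dots> \<subseteq> \<gamma> E"
    by (rule F2D[OF \<open>F2 \<gamma>\<close> E iso_normal_subgroup[OF f G(1) E(1) N]])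
  also have "\<dots> = f ` gext \<gamma> G"
    using gext_iso_image_nat[OF \<gamma> G E(1) f] by simp
  finally show ?thesis
    using inj_on_image_subset_iff[OF f_inj N_sub gext_subset_carrier] by simp
qed

lemma gext_Int_normal_subgroup_subset:
  assumes \<gamma>: "functorial \<gamma>" and "F5 \<gamma>" and G: "group G" "finite (carrier G)" and N: "N \<lhd> G"
  shows "gext \<gamma> G \<inter> N \<subseteq> gext \<gamma> (G\<lparr>carrier := N\<rparr>)"
proof -
  obtain f and E :: "nat monoid" where E: "group E" "finite (carrier E)" and f: "f \<in> iso G E"
    using finite_group_iso_nat_group[OF G] by blast
  have f_inj: "inj_on f (carrier G)"
    using f by (simp add: iso_iff)
  have N_sub: "N \<subseteq> carrier G"
    using subgroup.subset[OF normal_imp_subgroup[OF N]] .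
  have "f ` (gext \<gamma> G \<inter> N) = f ` gext \<gamma> G \<inter> f ` N"
    by (rule inj_on_image_Int[OF f_inj gext_subset_carrier N_sub])
  also have "\<dots> = \<gamma> E \<inter> f ` N"
    using gext_iso_image_nat[OF \<gamma> G E(1) f] by simp
  also have "\<dots> \<subseteq> \<gamma> (E\<lparr>carrier := f ` N\<rparr>)"
    by (rule F5D[OF \<open>F5 \<gamma>\<close> E iso_normal_subgroup[OF f G(1) E(1) N]])
  also have "\<dots> = f ` gext \<gamma> (G\<lparr>carrier := N\<rparr>)"
    using gext_subgroup_iso_image_nat[OF \<gamma> G E(1) f normal_imp_subgroup[OF N]] by simp
  moreover have "gext \<gamma> G \<inter> N \<subseteq> carrier G"
    using N_sub by blast
  moreover have "gext \<gamma> (G\<lparr>carrier := N\<rparr>) \<subseteq> carrier G"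
    using gext_subset_carrier[of \<gamma> "G\<lparr>carrier := N\<rparr>"] N_sub by simp
  ultimately show ?thesis
    using inj_on_image_subset_iff[OF f_inj] by blast
qed

section \<open>The gamma-series\<close>

lemma normal_gseries:
  assumes \<gamma>: "functorial \<gamma>" and G: "group G" "finite (carrier G)"
  shows "gseries \<gamma> G k \<lhd> G"
proof (induction k)
  case 0
  show ?case
    using group.one_is_normal[OF G(1)] by simp
next
  case (Suc k)
  let ?M = "gseries \<gamma> G k"
  interpret normal ?M G by (fact Suc.IH)
  have "gext \<gamma> (G Mod ?M) \<lhd> G Mod ?M"
    using normal_gext[OF \<gamma> factorgroup_is_group finite_carrier_FactGroup[OF G(2)]] .
  then show ?case
    using factgroup_subgroup_union_normal factgroup_subgroup_union_char[OF normal_imp_subgroup]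
    by fastforce
qed

lemma gseries_subset_carrier:
  assumes "functorial \<gamma>" and "group G" "finite (carrier G)"
  shows "gseries \<gamma> G k \<subseteq> carrier G"
  using subgroup.subset[OF normal_imp_subgroup[OF normal_gseries[OF assms]]] .

lemma gseries_Suc_mono:
  assumes \<gamma>: "functorial \<gamma>" and G: "group G" "finite (carrier G)"
  shows "gseries \<gamma> G k \<subseteq> gseries \<gamma> G (Suc k)"
proof
  fix x assume x: "x \<in> gseries \<gamma> G k"
  let ?M = "gseries \<gamma> G k"
  interpret normal ?M G by (fact normal_gseries[OF assms])
  have "?M #>\<^bsub>G\<^esub> x = \<one>\<^bsub>G Mod ?M\<^esub>"
    using rcos_const x by simp
  moreover have "\<one>\<^bsub>G Mod ?M\<^esub> \<in> gext \<gamma> (G Mod ?M)"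
    using subgroup.one_closed[OF normal_imp_subgroup[OF
          normal_gext[OF \<gamma> factorgroup_is_group finite_carrier_FactGroup[OF G(2)]]]] .
  ultimately show "x \<in> gseries \<gamma> G (Suc k)"
    using x subset by auto
qed

lemma gseries_mono:
  assumes "functorial \<gamma>" and "group G" "finite (carrier G)" and "k \<le> m"
  shows "gseries \<gamma> G k \<subseteq> gseries \<gamma> G m"
  using lift_Suc_mono_le[of "gseries \<gamma> G", OF gseries_Suc_mono[OF assms(1-3)] assms(4)] .

lemma gseries_psubset_Suc:
  assumes \<gamma>: "functorial \<gamma>" and NT: "nontrivial_functorial \<gamma>" and G: "group G" "finite (carrier G)"
    and proper: "gseries \<gamma> G k \<noteq> carrier G"
  shows "gseries \<gamma> G k \<subset> gseries \<gamma> G (Suc k)"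
proof -
  let ?M = "gseries \<gamma> G k"
  interpret normal ?M G by (fact normal_gseries[OF \<gamma> G])
  have "carrier (G Mod ?M) \<noteq> {\<one>\<^bsub>G Mod ?M\<^esub>}"
    using fact_group_trivial_iff[OF G(2)] proper by blast
  then have "gext \<gamma> (G Mod ?M) \<noteq> {\<one>\<^bsub>G Mod ?M\<^esub>}"
    using gext_nontrivial[OF \<gamma> NT factorgroup_is_group finite_carrier_FactGroup[OF G(2)]] by blast
  moreover have "\<one>\<^bsub>G Mod ?M\<^esub> \<in> gext \<gamma> (G Mod ?M)"
    using subgroup.one_closed[OF normal_imp_subgroup[OF
          normal_gext[OF \<gamma> factorgroup_is_group finite_carrier_FactGroup[OF G(2)]]]] .
  ultimately obtain C where C: "C \<in> gext \<gamma> (G Mod ?M)" "C \<noteq> ?M"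
    by auto
  then obtain x where x: "x \<in> carrier G" "C = ?M #>\<^bsub>G\<^esub> x"
    using gext_subset_carrier[of \<gamma> "G Mod ?M"] by (auto simp: carrier_FactGroup)
  then have "x \<notin> ?M"
    using C(2) rcos_const by blast
  moreover have "x \<in> gseries \<gamma> G (Suc k)"
    using x C(1) by simp
  ultimately show ?thesis
    using gseries_Suc_mono[OF \<gamma> G] by blast
qed

lemma gseries_eventually_carrier:
  assumes \<gamma>: "functorial \<gamma>" and NT: "nontrivial_functorial \<gamma>" and G: "group G" "finite (carrier G)"
  shows "\<exists>h. gseries \<gamma> G h = carrier G"
proof (rule ccontr)
  assume "\<nexists>h. gseries \<gamma> G h = carrier G"
  then have "k < card (gseries \<gamma> G k)" for k
  proof (induction k)
    case 0
    show ?case by simp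
  next
    case (Suc k)
    have "card (gseries \<gamma> G k) < card (gseries \<gamma> G (Suc k))"
      using psubset_card_mono[OF finite_subset[OF gseries_subset_carrier[OF \<gamma> G] G(2)]
          gseries_psubset_Suc[OF \<gamma> NT G]] Suc.prems by blast
    then show ?case
      using Suc by simp
  qed
  moreover have "card (gseries \<gamma> G k) \<le> card (carrier G)" for k
    using card_mono[OF G(2) gseries_subset_carrier[OF \<gamma> G]] .
  ultimately show False
    using leD by blast
qed

lemma hgamma_le_iff:
  assumes \<gamma>: "functorial \<gamma>" and NT: "nontrivial_functorial \<gamma>" and G: "group G" "finite (carrier G)"
  shows "hgamma \<gamma> G \<le> h \<longleftrightarrow> gseries \<gamma> G h = carrier G"
proof
  assume "hgamma \<gamma> G \<le> h"
  moreover have "gseries \<gamma> G (hgamma \<gamma> G) = carrier G"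
    unfolding hgamma_def using LeastI_ex[OF gseries_eventually_carrier[OF \<gamma> NT G]] .
  ultimately show "gseries \<gamma> G h = carrier G"
    using gseries_mono[OF \<gamma> G] gseries_subset_carrier[OF \<gamma> G] by blast
next
  assume "gseries \<gamma> G h = carrier G"
  then show "hgamma \<gamma> G \<le> h"
    unfolding hgamma_def by (rule Least_le)
qed

lemma gseries_surj_hom_image_subset:
  assumes \<gamma>: "functorial \<gamma>" and F1: "F1 \<gamma>" and G: "group G" "finite (carrier G)" and H: "group H"
    and \<phi>: "\<phi> \<in> hom G H" and onto: "\<phi> ` carrier G = carrier H"
  shows "\<phi> ` gseries \<gamma> G k \<subseteq> gseries \<gamma> H k"
proof (induction k)
  case 0
  show ?case
    using hom_one[OF \<phi> G(1) H] by simp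
next
  case (Suc k)
  have finH: "finite (carrier H)"
    using finite_imageI[OF G(2), of \<phi>] onto by simp
  let ?M = "gseries \<gamma> G k" and ?L = "gseries \<gamma> H k"
  have M: "?M \<lhd> G" and L: "?L \<lhd> H"
    using normal_gseries[OF \<gamma> G] normal_gseries[OF \<gamma> H finH] .
  obtain \<psi> where \<psi>: "\<psi> \<in> hom (G Mod ?M) (H Mod ?L)" "\<psi> ` carrier (G Mod ?M) = carrier (H Mod ?L)"
      "\<And>x. x \<in> carrier G \<Longrightarrow> \<psi> (?M #>\<^bsub>G\<^esub> x) = ?L #>\<^bsub>H\<^esub> \<phi> x"
    using FactGroup_surj_hom[OF G(1) H \<phi> onto M L Suc.IH] by blast
  have \<psi>_gext: "\<psi> ` gext \<gamma> (G Mod ?M) \<subseteq> gext \<gamma> (H Mod ?L)"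
    using gext_surj_hom_image_subset[OF \<gamma> F1 normal.factorgroup_is_group[OF M]
        finite_carrier_FactGroup[OF G(2)] normal.factorgroup_is_group[OF L] \<psi>(1,2)] .
  show ?case
  proof
    fix y assume "y \<in> \<phi> ` gseries \<gamma> G (Suc k)"
    then obtain x where x: "x \<in> carrier G" "?M #>\<^bsub>G\<^esub> x \<in> gext \<gamma> (G Mod ?M)" "y = \<phi> x"
      by auto
    then have "?L #>\<^bsub>H\<^esub> \<phi> x \<in> gext \<gamma> (H Mod ?L)"
      using \<psi>_gext \<psi>(3)[OF x(1)] by auto
    then show "y \<in> gseries \<gamma> H (Suc k)"
      using x(3) hom_in_carrier[OF \<phi> x(1)] by simp
  qed
qed

lemma rcos_mem_gext_FactGroup_normal:
  assumes \<gamma>: "functorial \<gamma>" and F1: "F1 \<gamma>" and F2: "F2 \<gamma>" and G: "group G" "finite (carrier G)"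
    and N: "N \<lhd> G" and M: "M \<lhd> G" and L: "L \<lhd> G\<lparr>carrier := N\<rparr>" and LM: "L \<subseteq> M"
    and y: "y \<in> N" and Ly: "L #>\<^bsub>G\<^esub> y \<in> gext \<gamma> (G\<lparr>carrier := N\<rparr> Mod L)"
  shows "M #>\<^bsub>G\<^esub> y \<in> gext \<gamma> (G Mod M)"
proof -
  let ?Q = "(\<lambda>a. M #>\<^bsub>G\<^esub> a) ` N"
  obtain \<psi> where \<psi>: "\<psi> \<in> hom (G\<lparr>carrier := N\<rparr> Mod L) ((G Mod M)\<lparr>carrier := ?Q\<rparr>)"
      "\<psi> ` carrier (G\<lparr>carrier := N\<rparr> Mod L) = ?Q"
      "\<And>y. y \<in> N \<Longrightarrow> \<psi> (L #>\<^bsub>G\<^esub> y) = M #>\<^bsub>G\<^esub> y"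
    using FactGroup_normal_subgroup_hom[OF G(1) N M L LM] by blast
  have GN: "finite (carrier (G\<lparr>carrier := N\<rparr>))"
    using finite_group_restrict[OF G normal_imp_subgroup[OF N]] by simp
  have Q: "?Q \<lhd> G Mod M"
    using normal_image_FactGroup[OF N M] .
  have "\<psi> ` gext \<gamma> (G\<lparr>carrier := N\<rparr> Mod L) \<subseteq> gext \<gamma> ((G Mod M)\<lparr>carrier := ?Q\<rparr>)"
    using gext_surj_hom_image_subset[OF \<gamma> F1 normal.factorgroup_is_group[OF L]
        finite_carrier_FactGroup[OF GN]
        subgroup.subgroup_is_group[OF normal_imp_subgroup[OF Q] normal.factorgroup_is_group[OF M]]
        \<psi>(1)] \<psi>(2) by simp
  also have "\<dots> \<subseteq> gext \<gamma> (G Mod M)"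
    using gext_normal_subgroup_subset[OF \<gamma> F2 normal.factorgroup_is_group[OF M]
        finite_carrier_FactGroup[OF G(2)] Q] .
  finally show ?thesis
    using Ly \<psi>(3)[OF y] by blast
qed

text \<open>Here \<open>L = M \<inter> N\<close>, so the map \<open>N/L \<rightarrow> NM/M\<close> is an isomorphism, and (F5) pulls \<open>\<gamma>\<close> back
  along it.\<close>

lemma rcos_mem_gext_FactGroup_normal_rev:
  assumes \<gamma>: "functorial \<gamma>" and F5: "F5 \<gamma>" and G: "group G" "finite (carrier G)"
    and N: "N \<lhd> G" and M: "M \<lhd> G" and L: "L \<lhd> G\<lparr>carrier := N\<rparr>"
    and LM: "L \<subseteq> M" and MNL: "M \<inter> N \<subseteq> L"
    and y: "y \<in> N" and My: "M #>\<^bsub>G\<^esub> y \<in> gext \<gamma> (G Mod M)"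
  shows "L #>\<^bsub>G\<^esub> y \<in> gext \<gamma> (G\<lparr>carrier := N\<rparr> Mod L)"
proof -
  let ?Q = "(\<lambda>a. M #>\<^bsub>G\<^esub> a) ` N"
  obtain \<psi> where \<psi>: "\<psi> \<in> hom (G\<lparr>carrier := N\<rparr> Mod L) ((G Mod M)\<lparr>carrier := ?Q\<rparr>)"
      "\<psi> ` carrier (G\<lparr>carrier := N\<rparr> Mod L) = ?Q"
      "\<And>y. y \<in> N \<Longrightarrow> \<psi> (L #>\<^bsub>G\<^esub> y) = M #>\<^bsub>G\<^esub> y"
    using FactGroup_normal_subgroup_hom[OF G(1) N M L LM] by blast
  have \<psi>_inj: "inj_on \<psi> (carrier (G\<lparr>carrier := N\<rparr> Mod L))"
    using FactGroup_normal_subgroup_hom_inj[OF G(1) N M L MNL \<psi>(1,3)] .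
  have GN: "finite (carrier (G\<lparr>carrier := N\<rparr>))"
    using finite_group_restrict[OF G normal_imp_subgroup[OF N]] by simp
  have Q: "?Q \<lhd> G Mod M"
    using normal_image_FactGroup[OF N M] .
  have GM: "group (G Mod M)"
    using normal.factorgroup_is_group[OF M] .
  have "\<psi> \<in> iso (G\<lparr>carrier := N\<rparr> Mod L) ((G Mod M)\<lparr>carrier := ?Q\<rparr>)"
    using \<psi>(1,2) \<psi>_inj by (simp add: iso_iff)
  then have "gext \<gamma> ((G Mod M)\<lparr>carrier := ?Q\<rparr>) = \<psi> ` gext \<gamma> (G\<lparr>carrier := N\<rparr> Mod L)"
    using gext_iso_image[OF \<gamma> normal.factorgroup_is_group[OF L] finite_carrier_FactGroup[OF GN]
        subgroup.subgroup_is_group[OF normal_imp_subgroup[OF Q] GM]] by simp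
  moreover have "M #>\<^bsub>G\<^esub> y \<in> gext \<gamma> ((G Mod M)\<lparr>carrier := ?Q\<rparr>)"
    using gext_Int_normal_subgroup_subset[OF \<gamma> F5 GM finite_carrier_FactGroup[OF G(2)] Q] My y
    by blast
  moreover have "L #>\<^bsub>G\<^esub> y \<in> carrier (G\<lparr>carrier := N\<rparr> Mod L)"
    using y by (auto simp: carrier_FactGroup)
  ultimately show ?thesis
    using inj_on_image_mem_iff[OF \<psi>_inj _ gext_subset_carrier] \<psi>(3)[OF y] by metis
qed

lemma gseries_normal_subgroup_subset:
  assumes \<gamma>: "functorial \<gamma>" and F1: "F1 \<gamma>" and F2: "F2 \<gamma>" and G: "group G" "finite (carrier G)"
    and N: "N \<lhd> G"
  shows "gseries \<gamma> (G\<lparr>carrier := N\<rparr>) k \<subseteq> gseries \<gamma> G k"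
proof (induction k)
  case 0
  show ?case by simp
next
  case (Suc k)
  have L: "gseries \<gamma> (G\<lparr>carrier := N\<rparr>) k \<lhd> G\<lparr>carrier := N\<rparr>"
    using normal_gseries[OF \<gamma> finite_group_restrict[OF G normal_imp_subgroup[OF N]]] .
  show ?case
    using rcos_mem_gext_FactGroup_normal[OF \<gamma> F1 F2 G N normal_gseries[OF \<gamma> G] L Suc.IH]
      subgroup.subset[OF normal_imp_subgroup[OF N]] by auto
qed

lemma gseries_Int_normal_subgroup_subset:
  assumes \<gamma>: "functorial \<gamma>" and F1: "F1 \<gamma>" and F2: "F2 \<gamma>" and F5: "F5 \<gamma>"
    and G: "group G" "finite (carrier G)" and N: "N \<lhd> G"
  shows "gseries \<gamma> G k \<inter> N \<subseteq> gseries \<gamma> (G\<lparr>carrier := N\<rparr>) k"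
proof (induction k)
  case 0
  show ?case by auto
next
  case (Suc k)
  have L: "gseries \<gamma> (G\<lparr>carrier := N\<rparr>) k \<lhd> G\<lparr>carrier := N\<rparr>"
    using normal_gseries[OF \<gamma> finite_group_restrict[OF G normal_imp_subgroup[OF N]]] .
  show ?case
    using rcos_mem_gext_FactGroup_normal_rev[OF \<gamma> F5 G N normal_gseries[OF \<gamma> G] L
        gseries_normal_subgroup_subset[OF \<gamma> F1 F2 G N] Suc.IH]
    by auto
qed

lemma gseries_subnormal_subset:
  assumes \<gamma>: "functorial \<gamma>" and F1: "F1 \<gamma>" and F2: "F2 \<gamma>" and G: "group G" "finite (carrier G)"
    and H: "subnormal G H"
  shows "gseries \<gamma> (G\<lparr>carrier := H\<rparr>) k \<subseteq> gseries \<gamma> G k"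
  using H
proof (induction rule: subnormal.induct)
  case refl
  show ?case by simp
next
  case (step K H)
  have K: "subgroup K G"
    using subnormal_imp_subgroup[OF G(1) step.hyps(1)] .
  note GK = finite_group_restrict[OF G K]
  have "gseries \<gamma> (G\<lparr>carrier := H\<rparr>) k \<subseteq> gseries \<gamma> (G\<lparr>carrier := K\<rparr>) k"
    using gseries_normal_subgroup_subset[OF \<gamma> F1 F2 GK step.hyps(2)] by simp
  then show ?case
    using step.IH by (rule order.trans)
qed

lemma gseries_Int_subnormal_subset:
  assumes \<gamma>: "functorial \<gamma>" and F1: "F1 \<gamma>" and F2: "F2 \<gamma>" and F5: "F5 \<gamma>"
    and G: "group G" "finite (carrier G)" and H: "subnormal G H"
  shows "gseries \<gamma> G k \<inter> H \<subseteq> gseries \<gamma> (G\<lparr>carrier := H\<rparr>) k"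
  using H
proof (induction rule: subnormal.induct)
  case refl
  show ?case
    using gseries_subset_carrier[OF \<gamma> G] by auto
next
  case (step K H)
  have K: "subgroup K G"
    using subnormal_imp_subgroup[OF G(1) step.hyps(1)] .
  note GK = finite_group_restrict[OF G K]
  have "H \<subseteq> K"
    using subgroup.subset[OF normal_imp_subgroup[OF step.hyps(2)]] by simp
  then have "gseries \<gamma> G k \<inter> H \<subseteq> gseries \<gamma> (G\<lparr>carrier := K\<rparr>) k \<inter> H"
    using step.IH by blast
  also have "\<dots> \<subseteq> gseries \<gamma> (G\<lparr>carrier := H\<rparr>) k"
    using gseries_Int_normal_subgroup_subset[OF \<gamma> F1 F2 F5 GK step.hyps(2)] by simp
  finally show ?case .
qed

section \<open>Heights\<close>

lemma hgamma_surj_hom_le: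
  assumes \<gamma>: "functorial \<gamma>" and NT: "nontrivial_functorial \<gamma>" and F1: "F1 \<gamma>"
    and G: "group G" "finite (carrier G)" and H: "group H"
    and \<phi>: "\<phi> \<in> hom G H" and onto: "\<phi> ` carrier G = carrier H"
  shows "hgamma \<gamma> H \<le> hgamma \<gamma> G"
proof -
  have finH: "finite (carrier H)"
    using finite_imageI[OF G(2), of \<phi>] onto by simp
  have "gseries \<gamma> G (hgamma \<gamma> G) = carrier G"
    using hgamma_le_iff[OF \<gamma> NT G] by blast
  then have "carrier H \<subseteq> gseries \<gamma> H (hgamma \<gamma> G)"
    using gseries_surj_hom_image_subset[OF \<gamma> F1 G H \<phi> onto, of "hgamma \<gamma> G"] onto by simp
  then show ?thesis
    using hgamma_le_iff[OF \<gamma> NT H finH] gseries_subset_carrier[OF \<gamma> H finH] by blast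
qed

lemma hgamma_subnormal_le:
  assumes \<gamma>: "functorial \<gamma>" and NT: "nontrivial_functorial \<gamma>" and F1: "F1 \<gamma>" and F2: "F2 \<gamma>"
    and F5: "F5 \<gamma>" and G: "group G" "finite (carrier G)" and A: "subnormal G A"
  shows "hgamma \<gamma> (G\<lparr>carrier := A\<rparr>) \<le> hgamma \<gamma> G"
proof -
  have sA: "subgroup A G"
    using subnormal_imp_subgroup[OF G(1) A] .
  note GA = finite_group_restrict[OF G sA]
  have "gseries \<gamma> G (hgamma \<gamma> G) = carrier G"
    using hgamma_le_iff[OF \<gamma> NT G] by blast
  then have "A \<subseteq> gseries \<gamma> (G\<lparr>carrier := A\<rparr>) (hgamma \<gamma> G)"
    using gseries_Int_subnormal_subset[OF \<gamma> F1 F2 F5 G A, of "hgamma \<gamma> G"] subgroup.subset[OF sA]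
    by blast
  then show ?thesis
    using hgamma_le_iff[OF \<gamma> NT GA] gseries_subset_carrier[OF \<gamma> GA] by force
qed

lemma hgamma_le_of_generate_subnormal:
  assumes \<gamma>: "functorial \<gamma>" and NT: "nontrivial_functorial \<gamma>" and F1: "F1 \<gamma>" and F2: "F2 \<gamma>"
    and G: "group G" "finite (carrier G)"
    and A: "\<forall>i \<in> I. subnormal G (A i)" and gen: "generate G (\<Union>i \<in> I. A i) = carrier G"
    and h: "\<forall>i \<in> I. hgamma \<gamma> (G\<lparr>carrier := A i\<rparr>) \<le> h"
  shows "hgamma \<gamma> G \<le> h"
proof -
  have "A i \<subseteq> gseries \<gamma> G h" if i: "i \<in> I" for i
  proof -
    have sA: "subgroup (A i) G"
      using subnormal_imp_subgroup[OF G(1)] A i by blast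
    note GA = finite_group_restrict[OF G sA]
    have "gseries \<gamma> (G\<lparr>carrier := A i\<rparr>) h = A i"
      using hgamma_le_iff[OF \<gamma> NT GA] h i by auto
    then show ?thesis
      using gseries_subnormal_subset[OF \<gamma> F1 F2 G, of "A i" h] A i by simp
  qed
  then have "carrier G \<subseteq> gseries \<gamma> G h"
    using group.generate_subgroup_incl[OF G(1) _ normal_imp_subgroup[OF normal_gseries[OF \<gamma> G]]] gen
    by (metis UN_least)
  then show ?thesis
    using hgamma_le_iff[OF \<gamma> NT G] gseries_subset_carrier[OF \<gamma> G] by blast
qed

lemma hgamma_direct_factor_le:
  assumes \<gamma>: "functorial \<gamma>" and NT: "nontrivial_functorial \<gamma>" and F1: "F1 \<gamma>"
    and G: "group G" "finite (carrier G)" and idp: "internal_direct_product G I A" and i: "i \<in> I"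
  shows "hgamma \<gamma> (G\<lparr>carrier := A i\<rparr>) \<le> hgamma \<gamma> G"
proof -
  obtain \<phi> where \<phi>: "\<phi> \<in> hom G (G\<lparr>carrier := A i\<rparr>)" "\<phi> ` carrier G = A i"
    using internal_direct_product_factor_surj_hom[OF G(1) idp i] by blast
  have "subgroup (A i) G"
    using idp i normal_imp_subgroup unfolding internal_direct_product_def by blast
  then show ?thesis
    using hgamma_surj_hom_le[OF \<gamma> NT F1 G finite_group_restrict(1)[OF G] \<phi>(1)] \<phi>(2) by simp
qed

theorem theorem8:
  fixes \<gamma> :: "nat monoid \<Rightarrow> nat set"
  assumes "functorial \<gamma>" and "nontrivial_functorial \<gamma>" and "F1 \<gamma>" and "F2 \<gamma>"
  shows "(\<forall>(G::'a monoid) (A::nat \<Rightarrow> 'a set) n.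
           group G \<and> finite (carrier G) \<and> 1 \<le> n \<and>
           internal_direct_product G {1..n} A \<longrightarrow>
           hgamma \<gamma> G = Max ((\<lambda>i. hgamma \<gamma> (G\<lparr>carrier := A i\<rparr>)) ` {1..n}))
       \<and> (\<forall>(G::'a monoid) (A::nat \<Rightarrow> 'a set) n.
           group G \<and> finite (carrier G) \<and> 1 \<le> n \<and>
           (\<forall>i \<in> {1..n}. subnormal G (A i)) \<and>
           generate G (\<Union>i \<in> {1..n}. A i) = carrier G \<longrightarrow>
           hgamma \<gamma> G \<le> Max ((\<lambda>i. hgamma \<gamma> (G\<lparr>carrier := A i\<rparr>)) ` {1..n})
           \<and> (F5 \<gamma> \<longrightarrow> hgamma \<gamma> G = Max ((\<lambda>i. hgamma \<gamma> (G\<lparr>carrier := A i\<rparr>)) ` {1..n})))"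
proof (intro conjI allI impI; elim conjE)
  fix G :: "'a monoid" and A :: "nat \<Rightarrow> 'a set" and n :: nat
  let ?h = "Max ((\<lambda>i. hgamma \<gamma> (G\<lparr>carrier := A i\<rparr>)) ` {1..n})"
  assume G: "group G" "finite (carrier G)" and "1 \<le> n"
  have Max_ge: "\<forall>i \<in> {1..n}. hgamma \<gamma> (G\<lparr>carrier := A i\<rparr>) \<le> ?h"
    by simp
  {
    assume idp: "internal_direct_product G {1..n} A"
    then have "\<forall>i \<in> {1..n}. subnormal G (A i)" and "generate G (\<Union>i \<in> {1..n}. A i) = carrier G"
      unfolding internal_direct_product_def by (auto intro: normal_imp_subnormal)
    then have "hgamma \<gamma> G \<le> ?h"
      using hgamma_le_of_generate_subnormal[OF assms G _ _ Max_ge] by blast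
    moreover have "?h \<le> hgamma \<gamma> G"
      using hgamma_direct_factor_le[OF assms(1-3) G idp] \<open>1 \<le> n\<close> by simp
    ultimately show "hgamma \<gamma> G = ?h"
      by (rule order_antisym)
  }
  assume sn: "\<forall>i \<in> {1..n}. subnormal G (A i)" and "generate G (\<Union>i \<in> {1..n}. A i) = carrier G"
  then show up: "hgamma \<gamma> G \<le> ?h"
    using hgamma_le_of_generate_subnormal[OF assms G _ _ Max_ge] by blast
  assume "F5 \<gamma>"
  then have "?h \<le> hgamma \<gamma> G"
    using hgamma_subnormal_le[OF assms _ G] sn \<open>1 \<le> n\<close> by simp
  with up show "hgamma \<gamma> G = ?h"
    by (rule order_antisym)
qed

end
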